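(* Let $q$ be an odd prime power, $a\in\mathbb{F}_q$, and $n\ge1$ an integer with $\gcd(n+1,q)=1$. Then the code $C_n(a)$ is LCD if and only if $$a\notin\{-\mu+\theta^i+\theta^{-i} : 1\le i\le n\}\cup\{\mu+\theta^i+\theta^{-i} : 1\le i\le n\},$$ where $\mu\in\mathbb{F}_{q^2}$ satisfies $\mu^2=-1$ and $\theta\in\overline{\mathbb{F}}_q$ is a primitive $2(n+1)$-th root of unity.
   Context: For $a\in\mathbb{F}_q$ and $n \ge 1$, $T_n(a)$ denotes the $n\times n$ symmetric tridiagonal Toeplitz matrix over $\mathbb{F}_q$ with all diagonal entries equal to $a$, all entries on the first super- and sub-diagonals equal to $1$, and all other entries $0$. $C_n(a)$ is the $[2n,n]$ linear code over $\mathbb{F}_q$ with generator matrix $[I_n \mid T_n(a)]$. A linear code $C$ is LCD (linear complementary dual) if $C\cap C^\perp=\{0\}$, where $C^\perp$ is the dual with respect to the standard Euclidean inner product. *)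

theory Defs
  imports "HOL-Algebra.Algebraic_Closure_Type"
begin

definition tridiag :: "'a::field \<Rightarrow> nat \<Rightarrow> nat \<Rightarrow> nat \<Rightarrow> 'a" where
  "tridiag a n i j =
     (if i < n \<and> j < n then
        (if i = j then a else if i = j + 1 \<or> j = i + 1 then 1 else 0)
      else 0)"

definition gen_matrix :: "'a::field \<Rightarrow> nat \<Rightarrow> nat \<Rightarrow> nat \<Rightarrow> 'a" where
  "gen_matrix a n i j =
     (if i < n \<and> j < 2 * n then
        (if j < n then (if i = j then 1 else 0) else tridiag a n i (j - n))
      else 0)"

text \<open>Linear code of length m generated by the rows of a k x m matrix G.
  Vectors of length m are functions nat => 'a vanishing outside 0..m-1.\<close>
definition lin_code :: "(nat \<Rightarrow> nat \<Rightarrow> 'a::field) \<Rightarrow> nat \<Rightarrow> nat \<Rightarrow> (nat \<Rightarrow> 'a) set" where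
  "lin_code G k m = {(\<lambda>j. if j < m then (\<Sum>i<k. x i * G i j) else 0) | x. True}"

definition dual_code :: "(nat \<Rightarrow> 'a::field) set \<Rightarrow> nat \<Rightarrow> (nat \<Rightarrow> 'a) set" where
  "dual_code C m = {y. (\<forall>j\<ge>m. y j = 0) \<and> (\<forall>c\<in>C. (\<Sum>j<m. c j * y j) = 0)}"

definition is_LCD :: "(nat \<Rightarrow> 'a::field) set \<Rightarrow> nat \<Rightarrow> bool" where
  "is_LCD C m \<longleftrightarrow> C \<inter> dual_code C m = {\<lambda>_. 0}"

definition C_code :: "nat \<Rightarrow> 'a::field \<Rightarrow> (nat \<Rightarrow> 'a) set" where
  "C_code n a = lin_code (gen_matrix a n) n (2 * n)"

end

theory Submission
  imports Defs
begin

(* With G = [I | T_n(a)] the code C_n(a) is LCD iff G G^T = I + T_n(a)^2 is nonsingular.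
   Over the algebraic closure I + T^2 = (T + \<mu> I)(T - \<mu> I), and the tridiagonal matrix
   T_n(b) is singular iff U_n(-b/2) = 0, where the Chebyshev polynomial U_n(x/2) has exactly the
   n roots \<theta>^i + \<theta>^-i, 1 \<le> i \<le> n. Conversely, the kernel vector of T_n(a + \<mu>)
   produced by the Chebyshev recurrence has coordinates in F + \<mu> F, and splitting it into its
   two F-components yields a kernel vector of I + T^2 over F itself. *)

section \<open>Chebyshev polynomials\<close>

(* cheb2 k x = U_k(x/2), with U_k the Chebyshev polynomial of the second kind. *)
fun cheb2 :: "nat \<Rightarrow> 'b::comm_ring_1 \<Rightarrow> 'b" where
  "cheb2 0 x = 1"
| "cheb2 (Suc 0) x = x"
| "cheb2 (Suc (Suc k)) x = x * cheb2 (Suc k) x - cheb2 k x"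

fun cheb2_poly :: "nat \<Rightarrow> 'b::comm_ring_1 poly" where
  "cheb2_poly 0 = 1"
| "cheb2_poly (Suc 0) = [:0, 1:]"
| "cheb2_poly (Suc (Suc k)) = pCons 0 (cheb2_poly (Suc k)) - cheb2_poly k"

lemma poly_cheb2_poly [simp]: "poly (cheb2_poly k) x = cheb2 k x"
  by (induction k rule: cheb2_poly.induct) auto

lemma degree_cheb2_poly: "degree (cheb2_poly k :: 'b::comm_ring_1 poly) \<le> k"
  by (induction k rule: cheb2_poly.induct) (auto intro!: degree_diff_le order.trans[OF degree_pCons_le])

lemma coeff_cheb2_poly_self: "coeff (cheb2_poly k :: 'b::comm_ring_1 poly) k = 1"
proof (induction k rule: cheb2_poly.induct)
  case (3 k)
  have "coeff (cheb2_poly k :: 'b poly) (Suc (Suc k)) = 0"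
    using degree_cheb2_poly[of k, where 'b='b] by (intro coeff_eq_0) linarith
  with 3 show ?case by simp
qed simp_all

lemma cheb2_poly_nonzero: "cheb2_poly k \<noteq> (0 :: 'b::comm_ring_1 poly)"
  using coeff_cheb2_poly_self[of k] by (metis coeff_0 zero_neq_one)

lemma cheb2_uminus: "cheb2 k (-x) = (-1) ^ k * cheb2 k x"
  by (induction k x rule: cheb2.induct) (auto simp: algebra_simps)

lemma cheb2_closed_form:
  assumes "t * s = 1"
  shows "cheb2 k (t + s) * (t - s) = t ^ Suc k - s ^ Suc k"
proof (induction k rule: cheb2_poly.induct)
  case (3 k)
  have "cheb2 (Suc (Suc k)) (t + s) * (t - s)
      = (t + s) * (cheb2 (Suc k) (t + s) * (t - s)) - cheb2 k (t + s) * (t - s)"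
    by (simp add: algebra_simps)
  also have "\<dots> = (t + s) * (t ^ Suc (Suc k) - s ^ Suc (Suc k)) - (t ^ Suc k - s ^ Suc k)"
    using 3 by simp
  also have "\<dots> = t ^ Suc (Suc (Suc k)) - s ^ Suc (Suc (Suc k)) + (t * s - 1) * (t ^ Suc k - s ^ Suc k)"
    by (simp add: algebra_simps)
  also have "\<dots> = t ^ Suc (Suc (Suc k)) - s ^ Suc (Suc (Suc k))"
    using assms by simp
  finally show ?case .
qed (use assms in \<open>simp_all add: algebra_simps power2_eq_square\<close>)

lemma cheb2_eq_0:
  fixes t s :: "'b::idom"
  assumes "t * s = 1" and "t ^ Suc k = s ^ Suc k" and "t \<noteq> s"
  shows "cheb2 k (t + s) = 0"
  using cheb2_closed_form[OF assms(1), of k] assms(2,3) by simp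

lemma finite_cheb2_roots: "finite {x :: 'b::idom. cheb2 k x = 0}"
  using poly_roots_finite[OF cheb2_poly_nonzero[of k]] by simp

lemma card_cheb2_roots: "card {x :: 'b::idom. cheb2 k x = 0} \<le> k"
  using card_poly_roots_bound[OF cheb2_poly_nonzero[of k, where 'b='b]] degree_cheb2_poly[of k, where 'b='b]
  by simp

lemma plus_inverse_eq_iff:
  fixes t s :: "'b::field"
  assumes "t \<noteq> 0" and "s \<noteq> 0"
  shows "t + inverse t = s + inverse s \<longleftrightarrow> t = s \<or> t * s = 1"
proof -
  have "t + inverse t - (s + inverse s) = (t - s) * (t * s - 1) / (t * s)"
    using assms by (simp add: field_simps)
  then show ?thesis
    using assms by (auto simp: right_minus_eq)
qed

definition primitive_root :: "nat \<Rightarrow> 'b::comm_ring_1 \<Rightarrow> bool" where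
  "primitive_root m \<theta> \<longleftrightarrow> \<theta> ^ m = 1 \<and> (\<forall>k. 0 < k \<and> k < m \<longrightarrow> \<theta> ^ k \<noteq> 1)"

lemma primitive_root_nonzero:
  fixes \<theta> :: "'b::field"
  assumes "primitive_root m \<theta>" and "0 < m"
  shows "\<theta> \<noteq> 0"
  using assms by (auto simp: primitive_root_def power_0_left)

lemma primitive_root_power_inj:
  fixes \<theta> :: "'b::field"
  assumes "primitive_root m \<theta>" and "i < m" and "j < m" and "\<theta> ^ i = \<theta> ^ j"
  shows "i = j"
proof (rule ccontr)
  have "\<theta> \<noteq> 0"
    using assms(1,2) by (intro primitive_root_nonzero) auto
  then have *: "\<theta> ^ (j - i) = 1" if "i < j" "\<theta> ^ i = \<theta> ^ j" for i j
    using that by (simp add: power_diff)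
  assume "i \<noteq> j"
  then show False
    using *[of i j] *[of j i] assms by (cases "i < j") (auto simp: primitive_root_def)
qed

lemma primitive_root_half_power:
  fixes \<theta> :: "'b::field"
  assumes "primitive_root (2 * m) \<theta>" and "0 < m"
  shows "\<theta> ^ m = -1"
proof -
  have "(\<theta> ^ m)\<^sup>2 = 1"
    using assms(1) unfolding primitive_root_def by (metis power_mult mult.commute)
  moreover have "\<theta> ^ m \<noteq> 1"
    using assms unfolding primitive_root_def by simp
  ultimately show ?thesis
    by (simp add: power2_eq_1_iff)
qed

lemma cheb2_primitive_root:
  fixes \<theta> :: "'b::field"
  assumes prim: "primitive_root (2 * (n + 1)) \<theta>" and "1 \<le> i" and "i \<le> n"
  shows "cheb2 n (\<theta> ^ i + inverse (\<theta> ^ i)) = 0"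
proof (rule cheb2_eq_0)
  have "\<theta> \<noteq> 0"
    using prim by (rule primitive_root_nonzero) simp
  then show "\<theta> ^ i * inverse (\<theta> ^ i) = 1"
    by simp
  have "(\<theta> ^ i) ^ Suc n = (\<theta> ^ (n + 1)) ^ i"
    by (metis Suc_eq_plus1 mult.commute power_mult)
  then have pow: "(\<theta> ^ i) ^ Suc n = (-1) ^ i"
    using primitive_root_half_power[OF prim] by simp
  then show "(\<theta> ^ i) ^ Suc n = inverse (\<theta> ^ i) ^ Suc n"
    by (metis inverse_1 inverse_minus_eq power_inverse)
  show "\<theta> ^ i \<noteq> inverse (\<theta> ^ i)"
  proof
    assume "\<theta> ^ i = inverse (\<theta> ^ i)"
    then have "\<theta> ^ (2 * i) = \<theta> ^ i * inverse (\<theta> ^ i)"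
      by (simp add: mult_2 power_add)
    then have "\<theta> ^ (2 * i) = 1"
      using \<open>\<theta> \<noteq> 0\<close> by simp
    then show False
      using prim assms(2,3) by (auto simp: primitive_root_def)
  qed
qed

lemma inj_on_plus_inverse_powers:
  fixes \<theta> :: "'b::field"
  assumes prim: "primitive_root (2 * (n + 1)) \<theta>"
  shows "inj_on (\<lambda>i. \<theta> ^ i + inverse (\<theta> ^ i)) {1..n}"
proof (rule inj_onI)
  fix i j assume ij: "i \<in> {1..n}" "j \<in> {1..n}"
    and "\<theta> ^ i + inverse (\<theta> ^ i) = \<theta> ^ j + inverse (\<theta> ^ j)"
  moreover have "\<theta> \<noteq> 0"
    using prim by (rule primitive_root_nonzero) simp
  ultimately have "\<theta> ^ i = \<theta> ^ j \<or> \<theta> ^ (i + j) = 1"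
    by (simp add: plus_inverse_eq_iff power_add)
  then show "i = j"
    using ij prim primitive_root_power_inj[OF prim, of i j] by (auto simp: primitive_root_def)
qed

lemma cheb2_roots:
  fixes \<theta> :: "'b::field"
  assumes "primitive_root (2 * (n + 1)) \<theta>"
  shows "{x. cheb2 n x = 0} = {\<theta> ^ i + inverse \<theta> ^ i | i. 1 \<le> i \<and> i \<le> n}"
proof -
  define c where "c i = \<theta> ^ i + inverse (\<theta> ^ i)" for i
  have "card (c ` {1..n}) = n"
    using inj_on_plus_inverse_powers[OF assms] by (simp add: card_image c_def)
  moreover have "c ` {1..n} \<subseteq> {x. cheb2 n x = 0}"
    using cheb2_primitive_root[OF assms] by (auto simp: c_def)
  ultimately have "c ` {1..n} = {x. cheb2 n x = 0}"
    using card_cheb2_roots[of n] finite_cheb2_roots[of n] by (metis card_seteq)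
  moreover have "{\<theta> ^ i + inverse \<theta> ^ i | i. 1 \<le> i \<and> i \<le> n} = c ` {1..n}"
    by (auto simp: c_def power_inverse)
  ultimately show ?thesis
    by simp
qed

section \<open>Tridiagonal Toeplitz operators\<close>

(* Vectors are functions nat \<Rightarrow> 'b; tri_apply n b y is T_n(b) y, which reads only the
   entries of y below n and vanishes from n on. *)
definition tri_offdiag :: "nat \<Rightarrow> (nat \<Rightarrow> 'b::comm_ring_1) \<Rightarrow> nat \<Rightarrow> 'b" where
  "tri_offdiag n y k = (if 0 < k then y (k - 1) else 0) + (if k + 1 < n then y (k + 1) else 0)"

definition tri_apply :: "nat \<Rightarrow> 'b::comm_ring_1 \<Rightarrow> (nat \<Rightarrow> 'b) \<Rightarrow> nat \<Rightarrow> 'b" where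
  "tri_apply n b y k = (if k < n then tri_offdiag n y k + b * y k else 0)"

definition has_nontrivial_kernel :: "nat \<Rightarrow> ((nat \<Rightarrow> 'b::zero) \<Rightarrow> nat \<Rightarrow> 'b) \<Rightarrow> bool" where
  "has_nontrivial_kernel n f \<longleftrightarrow> (\<exists>y. (\<exists>k<n. y k \<noteq> 0) \<and> (\<forall>k<n. f y k = 0))"

lemma tri_apply_cheb2_eq_0:
  assumes "cheb2 n (-b) = 0"
  shows "tri_apply n b (\<lambda>j. cheb2 j (-b)) = (\<lambda>_. 0)"
proof
  fix k
  show "tri_apply n b (\<lambda>j. cheb2 j (-b)) k = 0"
  proof (cases k)
    case 0
    then show ?thesis
      using assms by (cases "n = 1") (auto simp: tri_apply_def tri_offdiag_def)
  next
    case (Suc j)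
    show ?thesis
    proof (cases "n = Suc (Suc j)")
      case True
      have "cheb2 j (-b) + b * cheb2 (Suc j) (-b) = - cheb2 (Suc (Suc j)) (-b)"
        by (simp add: algebra_simps)
      also have "\<dots> = 0"
        using assms unfolding True by (simp del: cheb2.simps)
      finally show ?thesis
        using Suc True by (simp add: tri_apply_def tri_offdiag_def)
    next
      case False
      then show ?thesis
        using Suc by (auto simp: tri_apply_def tri_offdiag_def algebra_simps)
    qed
  qed
qed

lemma tri_kernel_cheb2:
  assumes ker: "\<forall>k<n. tri_apply n b y k = 0" and "0 < n" and "k \<le> n"
  shows "y 0 * cheb2 k (-b) = (if k < n then y k else 0)"
  using \<open>k \<le> n\<close>
proof (induction k rule: cheb2_poly.induct)
  case 1
  then show ?case
    using \<open>0 < n\<close> by simp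
next
  case 2
  then show ?case
    using ker[rule_format, of 0] by (auto simp: tri_apply_def tri_offdiag_def algebra_simps add_eq_0_iff)
next
  case (3 k)
  have "(y k + b * y (Suc k)) + (if Suc (Suc k) < n then y (Suc (Suc k)) else 0) = 0"
    using ker[rule_format, of "Suc k"] 3(3) by (auto simp: tri_apply_def tri_offdiag_def algebra_simps)
  then have "(if Suc (Suc k) < n then y (Suc (Suc k)) else 0) = - b * y (Suc k) - y k"
    by (simp only: add_eq_0_iff) (simp add: algebra_simps)
  moreover have "y 0 * cheb2 (Suc (Suc k)) (-b) = - b * y (Suc k) - y k"
    using 3 by (simp add: algebra_simps)
  ultimately show ?case
    by simp
qed

lemma has_nontrivial_kernel_tri_apply_iff:
  fixes b :: "'b::idom"
  assumes "0 < n"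
  shows "has_nontrivial_kernel n (tri_apply n b) \<longleftrightarrow> cheb2 n (-b) = 0"
proof
  assume "has_nontrivial_kernel n (tri_apply n b)"
  then obtain y where nonzero: "\<exists>k<n. y k \<noteq> 0" and ker: "\<forall>k<n. tri_apply n b y k = 0"
    unfolding has_nontrivial_kernel_def by blast
  have "y 0 \<noteq> 0"
    using nonzero tri_kernel_cheb2[OF ker \<open>0 < n\<close>] by (metis less_imp_le mult_zero_left)
  then show "cheb2 n (-b) = 0"
    using tri_kernel_cheb2[OF ker \<open>0 < n\<close>, of n] by simp
next
  assume "cheb2 n (-b) = 0"
  then show "has_nontrivial_kernel n (tri_apply n b)"
    unfolding has_nontrivial_kernel_def using assms
    by (intro exI[of _ "\<lambda>j. cheb2 j (-b)"] conjI exI[of _ 0]) (simp_all add: tri_apply_cheb2_eq_0)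
qed

lemma has_nontrivial_kernel_tri_apply_iff_root:
  fixes \<theta> :: "'b::field"
  assumes "0 < n" and "primitive_root (2 * (n + 1)) \<theta>"
  shows "has_nontrivial_kernel n (tri_apply n b) \<longleftrightarrow>
    b \<in> {\<theta> ^ i + inverse \<theta> ^ i | i. 1 \<le> i \<and> i \<le> n}"
proof -
  have "has_nontrivial_kernel n (tri_apply n b) \<longleftrightarrow> b \<in> {x. cheb2 n x = 0}"
    by (simp add: has_nontrivial_kernel_tri_apply_iff[OF assms(1)] cheb2_uminus)
  then show ?thesis
    unfolding cheb2_roots[OF assms(2)] .
qed

section \<open>The code and its Gram operator\<close>

definition codeword :: "nat \<Rightarrow> 'b::field \<Rightarrow> (nat \<Rightarrow> 'b) \<Rightarrow> nat \<Rightarrow> 'b" where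
  "codeword n a x j = (if j < n then x j else if j < 2 * n then tri_apply n a x (j - n) else 0)"

(* G G^T for the generator matrix G = [I | T_n(a)]. *)
definition gram_apply :: "nat \<Rightarrow> 'b::comm_ring_1 \<Rightarrow> (nat \<Rightarrow> 'b) \<Rightarrow> nat \<Rightarrow> 'b" where
  "gram_apply n a x k = x k + tri_apply n a (tri_apply n a x) k"

lemma tridiag_row_sum: "(\<Sum>i<n. x i * tridiag a n i k) = tri_apply n a x k"
proof (cases "k < n")
  case True
  have "(\<Sum>i<n. x i * tridiag a n i k)
      = (\<Sum>i<n. (if i = k then a * x k else 0) + (if 0 < k \<and> i = k - 1 then x (k - 1) else 0)
                + (if k + 1 < n \<and> i = k + 1 then x (k + 1) else 0))"
    using True by (intro sum.cong) (auto simp: tridiag_def)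
  also have "\<dots> = tri_apply n a x k"
    using True by (simp add: sum.distrib tri_apply_def tri_offdiag_def algebra_simps)
  finally show ?thesis .
qed (simp add: tridiag_def tri_apply_def)

lemma tridiag_symmetric: "tridiag a n i k = tridiag a n k i"
  unfolding tridiag_def by auto

lemma tri_apply_symmetric:
  fixes a :: "'b::field"
  shows "(\<Sum>k<n. tri_apply n a z k * w k) = (\<Sum>k<n. z k * tri_apply n a w k)"
proof -
  have "(\<Sum>k<n. tri_apply n a z k * w k) = (\<Sum>k<n. \<Sum>i<n. z i * tridiag a n i k * w k)"
    by (simp add: tridiag_row_sum[symmetric] sum_distrib_right)
  also have "\<dots> = (\<Sum>i<n. \<Sum>k<n. z i * (w k * tridiag a n k i))"
    by (subst sum.swap) (simp add: tridiag_symmetric algebra_simps)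
  also have "\<dots> = (\<Sum>k<n. z k * tri_apply n a w k)"
    by (simp add: tridiag_row_sum[symmetric] sum_distrib_left)
  finally show ?thesis .
qed

lemma C_code_eq_range: "C_code n a = range (codeword n a)"
proof -
  have "(\<lambda>j. if j < 2 * n then \<Sum>i<n. x i * gen_matrix a n i j else 0) = codeword n a x" for x
  proof
    fix j
    show "(if j < 2 * n then \<Sum>i<n. x i * gen_matrix a n i j else 0) = codeword n a x j"
    proof (cases "j < n")
      case True
      then have "(\<Sum>i<n. x i * gen_matrix a n i j) = (\<Sum>i<n. if i = j then x j else 0)"
        by (intro sum.cong) (auto simp: gen_matrix_def)
      then show ?thesis
        using True by (simp add: codeword_def)
    next
      case False
      then show ?thesis
        using tridiag_row_sum[where x = x and k = "j - n"]
        by (auto simp: codeword_def gen_matrix_def intro!: sum.cong)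
    qed
  qed
  then show ?thesis
    unfolding C_code_def lin_code_def by auto
qed

lemma sum_lessThan_double:
  "(\<Sum>j<2 * n. f j) = (\<Sum>j<n. f j) + (\<Sum>k<n. f (k + n))" for f :: "nat \<Rightarrow> 'b::comm_monoid_add"
proof -
  have "(\<Sum>j<2 * n. f j) = (\<Sum>j\<in>{0..<n}. f j) + (\<Sum>j\<in>{n..<2 * n}. f j)"
    using sum.atLeastLessThan_concat[of 0 n "2 * n" f] by (simp add: atLeast0LessThan)
  also have "(\<Sum>j\<in>{n..<2 * n}. f j) = (\<Sum>k<n. f (k + n))"
    using sum.shift_bounds_nat_ivl[of f 0 n n] by (simp add: mult_2 atLeast0LessThan)
  finally show ?thesis
    by (simp add: atLeast0LessThan)
qed

lemma inner_codeword:
  "(\<Sum>j<2 * n. codeword n a z j * codeword n a x j) = (\<Sum>k<n. z k * gram_apply n a x k)"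
proof -
  have "(\<Sum>j<2 * n. codeword n a z j * codeword n a x j)
      = (\<Sum>k<n. z k * x k) + (\<Sum>k<n. tri_apply n a z k * tri_apply n a x k)"
    by (simp add: sum_lessThan_double codeword_def)
  also have "(\<Sum>k<n. tri_apply n a z k * tri_apply n a x k) = (\<Sum>k<n. z k * tri_apply n a (tri_apply n a x) k)"
    by (rule tri_apply_symmetric)
  finally show ?thesis
    by (simp add: gram_apply_def sum.distrib algebra_simps)
qed

lemma codeword_mem_dual_iff:
  "codeword n a x \<in> dual_code (C_code n a) (2 * n) \<longleftrightarrow> (\<forall>k<n. gram_apply n a x k = 0)"
proof
  assume dual: "codeword n a x \<in> dual_code (C_code n a) (2 * n)"
  show "\<forall>k<n. gram_apply n a x k = 0"
  proof (intro allI impI)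
    fix k assume "k < n"
    have "(\<Sum>i<n. (if i = k then 1 else 0) * gram_apply n a x i) = 0"
      using dual by (simp add: dual_code_def C_code_eq_range flip: inner_codeword)
    also have "(\<Sum>i<n. (if i = k then 1 else 0) * gram_apply n a x i)
        = (\<Sum>i<n. if i = k then gram_apply n a x k else 0)"
      by (intro sum.cong) auto
    finally show "gram_apply n a x k = 0"
      using \<open>k < n\<close> by simp
  qed
next
  assume "\<forall>k<n. gram_apply n a x k = 0"
  then have "(\<Sum>j<2 * n. codeword n a z j * codeword n a x j) = 0" for z
    unfolding inner_codeword by (intro sum.neutral) simp
  then show "codeword n a x \<in> dual_code (C_code n a) (2 * n)"
    by (auto simp: dual_code_def C_code_eq_range codeword_def)
qed

lemma codeword_eq_0_iff: "codeword n a x = (\<lambda>_. 0) \<longleftrightarrow> (\<forall>k<n. x k = 0)"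
proof
  assume zero: "codeword n a x = (\<lambda>_. 0)"
  show "\<forall>k<n. x k = 0"
  proof (intro allI impI)
    fix k assume "k < n"
    then show "x k = 0"
      using fun_cong[OF zero, of k] by (simp add: codeword_def)
  qed
next
  assume "\<forall>k<n. x k = 0"
  then show "codeword n a x = (\<lambda>_. 0)"
    by (auto simp: codeword_def tri_apply_def tri_offdiag_def)
qed

lemma is_LCD_C_code_iff:
  "is_LCD (C_code n a) (2 * n) \<longleftrightarrow> \<not> has_nontrivial_kernel n (gram_apply n a)"
proof -
  define K where "K = {x. \<forall>k<n. gram_apply n a x k = 0}"
  have "C_code n a \<inter> dual_code (C_code n a) (2 * n) = codeword n a ` K"
    using codeword_mem_dual_iff[of n a] by (auto simp: C_code_eq_range K_def)
  moreover have "f ` A = {c} \<longleftrightarrow> (\<forall>y\<in>A. f y = c)" if "x \<in> A" "f x = c" for f A c x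
    using that by blast
  moreover have "(\<lambda>_. 0) \<in> K"
    by (simp add: K_def gram_apply_def tri_apply_def tri_offdiag_def)
  moreover have "codeword n a (\<lambda>_. 0) = (\<lambda>_. 0)"
    by (simp add: codeword_eq_0_iff)
  ultimately have "is_LCD (C_code n a) (2 * n) \<longleftrightarrow> (\<forall>x\<in>K. codeword n a x = (\<lambda>_. 0))"
    unfolding is_LCD_def by simp
  then show ?thesis
    by (auto simp: K_def has_nontrivial_kernel_def codeword_eq_0_iff)
qed

section \<open>Factorisation over the algebraic closure\<close>

lemma tri_offdiag_tri_apply:
  assumes "k < n"
  shows "tri_offdiag n (tri_apply n b y) k = tri_offdiag n (tri_offdiag n y) k + b * tri_offdiag n y k"
  using assms by (auto simp: tri_offdiag_def tri_apply_def algebra_simps)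

lemma tri_apply_tri_apply:
  assumes "k < n"
  shows "tri_apply n b\<^sub>1 (tri_apply n b\<^sub>2 y) k
    = tri_offdiag n (tri_offdiag n y) k + (b\<^sub>1 + b\<^sub>2) * tri_offdiag n y k + b\<^sub>1 * b\<^sub>2 * y k"
  using assms by (simp add: tri_apply_def tri_offdiag_tri_apply algebra_simps)

lemma gram_apply_factor:
  assumes "\<nu>\<^sup>2 = -1" and "k < n"
  shows "gram_apply n a y k = tri_apply n (a + \<nu>) (tri_apply n (a - \<nu>) y) k"
  using assms by (simp add: gram_apply_def tri_apply_tri_apply algebra_simps power2_eq_square)

lemma tri_apply_linear: "tri_apply n b (\<lambda>j. f j + c * g j) k = tri_apply n b f k + c * tri_apply n b g k"
  by (auto simp: tri_apply_def tri_offdiag_def algebra_simps)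

lemma gram_apply_linear: "gram_apply n b (\<lambda>j. f j + c * g j) k = gram_apply n b f k + c * gram_apply n b g k"
  by (simp add: gram_apply_def tri_apply_linear[abs_def] algebra_simps)

lemma tri_apply_to_ac: "to_ac (tri_apply n b x k) = tri_apply n (to_ac b) (\<lambda>j. to_ac (x j)) k"
  by (simp add: tri_apply_def tri_offdiag_def)

lemma gram_apply_to_ac: "to_ac (gram_apply n b x k) = gram_apply n (to_ac b) (\<lambda>j. to_ac (x j)) k"
  by (simp add: gram_apply_def tri_apply_to_ac[abs_def])

lemma has_nontrivial_kernel_gram_apply_to_ac:
  assumes "has_nontrivial_kernel n (gram_apply n a)"
  shows "has_nontrivial_kernel n (gram_apply n (to_ac a))"
proof -
  obtain x where "\<exists>k<n. x k \<noteq> 0" "\<forall>k<n. gram_apply n a x k = 0"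
    using assms unfolding has_nontrivial_kernel_def by blast
  then show ?thesis
    unfolding has_nontrivial_kernel_def
    by (intro exI[of _ "\<lambda>j. to_ac (x j)"]) (simp flip: gram_apply_to_ac)
qed

lemma has_nontrivial_kernel_gram_apply_imp:
  fixes a \<nu> :: "'b::field"
  assumes "\<nu>\<^sup>2 = -1" and "has_nontrivial_kernel n (gram_apply n a)"
  shows "has_nontrivial_kernel n (tri_apply n (a + \<nu>)) \<or> has_nontrivial_kernel n (tri_apply n (a - \<nu>))"
proof -
  obtain y where y: "\<exists>k<n. y k \<noteq> 0" and ker: "\<forall>k<n. gram_apply n a y k = 0"
    using assms(2) unfolding has_nontrivial_kernel_def by blast
  define z where "z = tri_apply n (a - \<nu>) y"
  have "\<forall>k<n. tri_apply n (a + \<nu>) z k = 0"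
    using ker gram_apply_factor[OF assms(1)] by (simp add: z_def)
  then show ?thesis
    using y unfolding has_nontrivial_kernel_def z_def by blast
qed

(* F + \<nu> F inside the algebraic closure: the ring F[\<nu>] when \<nu>^2 = -1. *)
definition base_adjoin :: "'b::field alg_closure \<Rightarrow> 'b alg_closure set" where
  "base_adjoin \<nu> = {to_ac u + \<nu> * to_ac v | u v. True}"

lemma to_ac_mem_base_adjoin: "to_ac u \<in> base_adjoin \<nu>"
  unfolding base_adjoin_def by (intro CollectI exI[of _ u] exI[of _ 0]) simp

lemma base_adjoin_diff:
  assumes "p \<in> base_adjoin \<nu>" and "q \<in> base_adjoin \<nu>"
  shows "p - q \<in> base_adjoin \<nu>"
proof -
  obtain u v u' v' where "p = to_ac u + \<nu> * to_ac v" "q = to_ac u' + \<nu> * to_ac v'"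
    using assms unfolding base_adjoin_def by blast
  then have "p - q = to_ac (u - u') + \<nu> * to_ac (v - v')"
    by (simp add: algebra_simps)
  then show ?thesis
    unfolding base_adjoin_def by blast
qed

lemma base_adjoin_mult:
  assumes "\<nu>\<^sup>2 = -1" and "p \<in> base_adjoin \<nu>" and "q \<in> base_adjoin \<nu>"
  shows "p * q \<in> base_adjoin \<nu>"
proof -
  obtain u v u' v' where "p = to_ac u + \<nu> * to_ac v" "q = to_ac u' + \<nu> * to_ac v'"
    using assms(2,3) unfolding base_adjoin_def by blast
  then have "p * q = to_ac u * to_ac u' + (\<nu> * \<nu>) * (to_ac v * to_ac v')
      + \<nu> * (to_ac u * to_ac v' + to_ac v * to_ac u')"
    by (simp add: algebra_simps)
  also have "\<dots> = to_ac (u * u' - v * v') + \<nu> * to_ac (u * v' + v * u')"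
    using assms(1) by (simp add: power2_eq_square)
  finally show ?thesis
    unfolding base_adjoin_def by blast
qed

lemma cheb2_mem_base_adjoin:
  assumes "\<nu>\<^sup>2 = -1" and "p \<in> base_adjoin \<nu>"
  shows "cheb2 k p \<in> base_adjoin \<nu>"
  by (induction k rule: cheb2_poly.induct)
    (auto intro: assms base_adjoin_mult base_adjoin_diff to_ac_mem_base_adjoin[of 1, simplified])

lemma to_ac_lin_comb_eq_0:
  assumes "\<nu> \<notin> range to_ac" and "to_ac p + \<nu> * to_ac q = 0"
  shows "p = 0 \<and> q = 0"
proof (cases "q = 0")
  case True
  then show ?thesis
    using assms(2) by simp
next
  case False
  have "\<nu> * to_ac q = - to_ac p"
    using assms(2) by (simp add: eq_neg_iff_add_eq_0 add.commute)
  then have "\<nu> = to_ac (- p / q)"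
    using False by (simp add: field_simps)
  then show ?thesis
    using assms(1) by blast
qed

lemma has_nontrivial_kernel_of_ac_combination:
  fixes f :: "(nat \<Rightarrow> 'b::field) \<Rightarrow> nat \<Rightarrow> 'b"
  assumes linear: "\<And>u v c k. f (\<lambda>j. u j + c * v j) k = f u k + c * f v k"
    and comb: "\<forall>k<n. to_ac (f u k) + \<nu> * to_ac (f v k) = 0"
    and nonzero: "to_ac (u 0) + \<nu> * to_ac (v 0) \<noteq> 0" and "0 < n"
  shows "has_nontrivial_kernel n f"
proof (cases "\<nu> \<in> range to_ac")
  case True
  then obtain m where m: "\<nu> = to_ac m"
    by blast
  have "f (\<lambda>j. u j + m * v j) k = 0" if "k < n" for k
  proof -
    have "to_ac (f (\<lambda>j. u j + m * v j) k) = 0"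
      using comb that by (simp add: linear m)
    then show ?thesis
      by simp
  qed
  moreover have "u 0 + m * v 0 \<noteq> 0"
  proof
    assume "u 0 + m * v 0 = 0"
    then have "to_ac (u 0 + m * v 0) = 0"
      by simp
    then show False
      using nonzero by (simp add: m)
  qed
  ultimately show ?thesis
    using \<open>0 < n\<close> unfolding has_nontrivial_kernel_def
    by (intro exI[of _ "\<lambda>j. u j + m * v j"]) auto
next
  case False
  have "f u k = 0 \<and> f v k = 0" if "k < n" for k
    using to_ac_lin_comb_eq_0[OF False comb[rule_format, OF that]] .
  moreover have "u 0 \<noteq> 0 \<or> v 0 \<noteq> 0"
    using nonzero by auto
  ultimately show ?thesis
    using \<open>0 < n\<close> unfolding has_nontrivial_kernel_def by (metis (no_types, lifting))
qed

lemma has_nontrivial_kernel_gram_apply_if: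
  fixes a :: "'b::field"
  assumes "0 < n" and \<nu>: "\<nu>\<^sup>2 = -1" and "has_nontrivial_kernel n (tri_apply n (to_ac a + \<nu>))"
  shows "has_nontrivial_kernel n (gram_apply n a)"
proof -
  define y where "y = (\<lambda>j. cheb2 j (- (to_ac a + \<nu>)))"
  have "cheb2 n (- (to_ac a + \<nu>)) = 0"
    using assms(3) has_nontrivial_kernel_tri_apply_iff[OF \<open>0 < n\<close>] by blast
  then have "tri_apply n (to_ac a + \<nu>) y = (\<lambda>_. 0)"
    unfolding y_def by (rule tri_apply_cheb2_eq_0)
  then have ker: "gram_apply n (to_ac a) y k = 0" if "k < n" for k
    using gram_apply_factor[of "- \<nu>", OF _ that] \<nu> by (simp add: tri_apply_def tri_offdiag_def)
  have "- (to_ac a + \<nu>) \<in> base_adjoin \<nu>"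
    unfolding base_adjoin_def by (intro CollectI exI[of _ "- a"] exI[of _ "- 1"]) simp
  then have "\<forall>j. \<exists>u v. y j = to_ac u + \<nu> * to_ac v"
    unfolding y_def using cheb2_mem_base_adjoin[OF \<nu>] by (auto simp: base_adjoin_def)
  then obtain u v where y: "\<And>j. y j = to_ac (u j) + \<nu> * to_ac (v j)"
    by metis
  have "to_ac (gram_apply n a u k) + \<nu> * to_ac (gram_apply n a v k) = gram_apply n (to_ac a) y k" for k
  proof -
    have "y = (\<lambda>j. to_ac (u j) + \<nu> * to_ac (v j))"
      using y by blast
    then show ?thesis
      by (simp add: gram_apply_to_ac gram_apply_linear)
  qed
  moreover have "to_ac (u 0) + \<nu> * to_ac (v 0) \<noteq> 0"
    using y[of 0] by (simp add: y_def)
  ultimately show ?thesis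
    using ker \<open>0 < n\<close> by (intro has_nontrivial_kernel_of_ac_combination[OF gram_apply_linear]) auto
qed

lemma has_nontrivial_kernel_gram_apply_iff:
  fixes a :: "'b::field"
  assumes "0 < n" and "\<mu>\<^sup>2 = -1"
  shows "has_nontrivial_kernel n (gram_apply n a) \<longleftrightarrow>
    has_nontrivial_kernel n (tri_apply n (to_ac a + \<mu>)) \<or> has_nontrivial_kernel n (tri_apply n (to_ac a - \<mu>))"
proof
  assume "has_nontrivial_kernel n (gram_apply n a)"
  then show "has_nontrivial_kernel n (tri_apply n (to_ac a + \<mu>)) \<or> has_nontrivial_kernel n (tri_apply n (to_ac a - \<mu>))"
    using assms(2) by (intro has_nontrivial_kernel_gram_apply_imp has_nontrivial_kernel_gram_apply_to_ac)
next
  have "(- \<mu>)\<^sup>2 = -1"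
    using assms(2) by simp
  then show "has_nontrivial_kernel n (tri_apply n (to_ac a + \<mu>)) \<or> has_nontrivial_kernel n (tri_apply n (to_ac a - \<mu>))
    \<Longrightarrow> has_nontrivial_kernel n (gram_apply n a)"
    using has_nontrivial_kernel_gram_apply_if[OF assms(1)] assms(2) by (metis diff_conv_add_uminus)
qed

theorem theorem2p4:
  fixes a :: "'a::{field,finite}" and n :: nat
    and \<mu> \<theta> :: "'a alg_closure"
  assumes "odd (card (UNIV :: 'a set))"
    and "n \<ge> 1"
    and "coprime (n + 1) (card (UNIV :: 'a set))"
    and "\<mu>\<^sup>2 = -1"
    and "\<theta> ^ (2 * (n + 1)) = 1"
    and "\<forall>k. 0 < k \<and> k < 2 * (n + 1) \<longrightarrow> \<theta> ^ k \<noteq> 1"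
  shows "is_LCD (C_code n a) (2 * n) \<longleftrightarrow>
           to_ac a \<notin> {- \<mu> + \<theta> ^ i + inverse \<theta> ^ i | i. 1 \<le> i \<and> i \<le> n}
                   \<union> {\<mu> + \<theta> ^ i + inverse \<theta> ^ i | i. 1 \<le> i \<and> i \<le> n}"
proof -
  have "0 < n"
    using assms(2) by simp
  have "primitive_root (2 * (n + 1)) \<theta>"
    using assms(5,6) by (simp add: primitive_root_def)
  note root_iff = has_nontrivial_kernel_tri_apply_iff_root[OF \<open>0 < n\<close> this]
  have "is_LCD (C_code n a) (2 * n) \<longleftrightarrow>
      \<not> (has_nontrivial_kernel n (tri_apply n (to_ac a + \<mu>))
         \<or> has_nontrivial_kernel n (tri_apply n (to_ac a - \<mu>)))"
    by (simp add: is_LCD_C_code_iff has_nontrivial_kernel_gram_apply_iff[OF \<open>0 < n\<close> assms(4)])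
  also have "\<dots> \<longleftrightarrow> \<not> (\<exists>i. (to_ac a + \<mu> = \<theta> ^ i + inverse \<theta> ^ i \<or> to_ac a - \<mu> = \<theta> ^ i + inverse \<theta> ^ i)
      \<and> 1 \<le> i \<and> i \<le> n)"
    unfolding root_iff by blast
  finally show ?thesis
    by (auto simp: algebra_simps)
qed

end
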